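(* Under the assumptions of the context, with $F$ having finite mean, define $c(G)=\lim_{n\to\infty}\mathbf E\big[\bar c^{(n)}_{i,j,k}\big]$ for distinct vertices $i,j,k$. Then this limit exists and equals $1$ if $\alpha<1$, equals $\mathbf E\big[(1+\beta\gamma W)^{-1}\big]$ (with $W\sim F$) if $\alpha=1$, and equals $0$ if $\alpha>1$.
   Context: Model $G(n,m,F)$: fix constants $\alpha,\beta,\gamma>0$ and a probability distribution $F$ on $(0,\infty)$; if $F$ has finite mean it is assumed to have mean $1$. For a positive integer $n$ let $m=\lfloor\beta n^\alpha\rfloor$, let $\mathcal V=\{1,\dots,n\}$ and $\mathcal A$ a set of $m$ elements ("groups"). Let $W_1,\dots,W_n$ be i.i.d. with distribution $F$ and set $p_i=\gamma W_i n^{-(1+\alpha)/2}\wedge 1$. Conditionally on the weights, form a bipartite graph $B(n,m,F)$ on $\mathcal V\cup\mathcal A$ by including each edge between $i\in\mathcal V$ and $a\in\mathcal A$ independently with probability $p_i$. The graph $G(n,m,F)$ on $\mathcal V$ has an edge between distinct $i,j$ iff some $a\in\mathcal A$ is adjacent to both in $B(n,m,F)$. $\bar{\mathbf P}_n$ is the law of $B(n,m,F)$ conditional on the weights, $E_{ij}$ is the event that $i$ and $j$ share a group, and $\bar c^{(n)}_{i,j,k}=\bar{\mathbf P}_n(E_{ij}\mid E_{ik}\cap E_{jk})$; the expectation $\mathbf E$ is over the weights. *)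

theory Defs
  imports "HOL-Probability.Probability"
begin

definition num_groups :: "real \<Rightarrow> real \<Rightarrow> nat \<Rightarrow> nat" where
  "num_groups \<alpha> \<beta> n = nat \<lfloor>\<beta> * real n powr \<alpha>\<rfloor>"

definition edge_prob :: "real \<Rightarrow> real \<Rightarrow> nat \<Rightarrow> real \<Rightarrow> real" where
  "edge_prob \<alpha> \<gamma> n w = min (\<gamma> * w * real n powr (- (1 + \<alpha>) / 2)) 1"

text \<open>A bipartite graph is encoded as its edge indicator on {1..n} x {1..m}.\<close>
definition bip_pmf :: "real \<Rightarrow> real \<Rightarrow> real \<Rightarrow> nat \<Rightarrow> (nat \<Rightarrow> real) \<Rightarrow> (nat \<times> nat \<Rightarrow> bool) pmf" where
  "bip_pmf \<alpha> \<beta> \<gamma> n W =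
     Pi_pmf ({1..n} \<times> {1..num_groups \<alpha> \<beta> n}) False
       (\<lambda>(i, a). bernoulli_pmf (edge_prob \<alpha> \<gamma> n (W i)))"

definition share_group :: "nat \<Rightarrow> nat \<Rightarrow> nat \<Rightarrow> (nat \<times> nat \<Rightarrow> bool) set" where
  "share_group m i j = {B. \<exists>a\<in>{1..m}. B (i, a) \<and> B (j, a)}"

definition cbar :: "real \<Rightarrow> real \<Rightarrow> real \<Rightarrow> nat \<Rightarrow> (nat \<Rightarrow> real) \<Rightarrow> nat \<Rightarrow> nat \<Rightarrow> nat \<Rightarrow> real" where
  "cbar \<alpha> \<beta> \<gamma> n W i j k =
     (let M = bip_pmf \<alpha> \<beta> \<gamma> n W; m = num_groups \<alpha> \<beta> n in
      measure_pmf.prob M (share_group m i j \<inter> share_group m i k \<inter> share_group m j k)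
      / measure_pmf.prob M (share_group m i k \<inter> share_group m j k))"

definition exp_cbar :: "real measure \<Rightarrow> real \<Rightarrow> real \<Rightarrow> real \<Rightarrow> nat \<Rightarrow> nat \<Rightarrow> nat \<Rightarrow> nat \<Rightarrow> real" where
  "exp_cbar F \<alpha> \<beta> \<gamma> n i j k =
     integral\<^sup>L (PiM {1..n} (\<lambda>_. F)) (\<lambda>W. cbar \<alpha> \<beta> \<gamma> n W i j k)"

end

theory Submission
  imports Defs "HOL-Real_Asymp.Real_Asymp"
begin

text \<open>
  Conditionally on the weights the three vertices meet the m groups independently, so by
  inclusion--exclusion over the complements both P(E_ik \<inter> E_jk) and P(E_ij \<inter> E_ik \<inter> E_jk) are
  alternating sums of m-th powers, i.e. finite differences of t \<mapsto> t^m. Bounding these differences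
  by the mean value theorem gives, with d = p_i p_j p_k and e = m (p_i p_j + p_i p_k + p_j p_k),
  numerator = m d (1 + O(e)) and denominator = m d (1 + (m - 1) p_k)(1 + O(e)).
  Since e = O(1/n), the conditional clustering coefficient behaves like 1 / (1 + m p_k), and
  m p_k \<sim> \<beta> \<gamma> W_k n^((\<alpha>-1)/2) tends to 0, \<beta> \<gamma> W_k or \<infinity> according as \<alpha> < 1, = 1 or > 1.
  As the coefficient depends only on W_i, W_j, W_k and lies in [0, 1], dominated convergence
  finishes the proof.
\<close>

section \<open>Products of probability mass functions\<close>

lemma map_pmf_Pi_pmf_pair:
  assumes "finite A" "u \<in> A" "v \<in> A" "u \<noteq> v"
  shows "map_pmf (\<lambda>f. (f u, f v)) (Pi_pmf A d p) = pair_pmf (p u) (p v)"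
proof -
  have A: "A = insert u (A - {u})" using assms by auto
  have "map_pmf (\<lambda>f. (f u, f v)) (Pi_pmf A d p)
      = map_pmf (\<lambda>f. (f u, f v)) (map_pmf (\<lambda>(y,f). f(u:=y)) (pair_pmf (p u) (Pi_pmf (A - {u}) d p)))"
    by (subst A, subst Pi_pmf_insert) (use assms in auto)
  also have "\<dots> = map_pmf (\<lambda>(a, b). (id a, (\<lambda>f. f v) b)) (pair_pmf (p u) (Pi_pmf (A - {u}) d p))"
    using assms by (auto simp: pmf.map_comp o_def case_prod_unfold intro!: map_pmf_cong)
  also have "\<dots> = pair_pmf (p u) (p v)"
    by (subst map_pair) (use assms in \<open>simp add: Pi_pmf_component\<close>)
  finally show ?thesis .
qed

lemma map_pmf_Pi_pmf_triple:
  assumes "finite A" "u \<in> A" "v \<in> A" "w \<in> A" "u \<noteq> v" "u \<noteq> w" "v \<noteq> w"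
  shows "map_pmf (\<lambda>f. (f u, f v, f w)) (Pi_pmf A d p) = pair_pmf (p u) (pair_pmf (p v) (p w))"
proof -
  have A: "A = insert u (A - {u})" using assms by auto
  have "map_pmf (\<lambda>f. (f u, f v, f w)) (Pi_pmf A d p)
      = map_pmf (\<lambda>f. (f u, f v, f w)) (map_pmf (\<lambda>(y,f). f(u:=y)) (pair_pmf (p u) (Pi_pmf (A - {u}) d p)))"
    by (subst A, subst Pi_pmf_insert) (use assms in auto)
  also have "\<dots> = map_pmf (\<lambda>(a, b). (id a, (\<lambda>f. (f v, f w)) b)) (pair_pmf (p u) (Pi_pmf (A - {u}) d p))"
    using assms by (auto simp: pmf.map_comp o_def case_prod_unfold intro!: map_pmf_cong)
  also have "\<dots> = pair_pmf (p u) (pair_pmf (p v) (p w))"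
    by (subst map_pair) (use assms in \<open>simp add: map_pmf_Pi_pmf_pair\<close>)
  finally show ?thesis .
qed

lemma measure_pmf_pair_pmf_Times:
  "measure_pmf.prob (pair_pmf M N) (A \<times> B) = measure_pmf.prob M A * measure_pmf.prob N B"
proof -
  have "measure_pmf.prob (pair_pmf M N) (A \<times> B)
      = measure_pmf.prob (pair_pmf M N) ((A \<inter> set_pmf M) \<times> (B \<inter> set_pmf N))"
    by (subst measure_Int_set_pmf[symmetric]) (simp add: Times_Int_Times Int_ac)
  also have "\<dots> = measure_pmf.prob M (A \<inter> set_pmf M) * measure_pmf.prob N (B \<inter> set_pmf N)"
    by (rule measure_pmf_prob_product) auto
  finally show ?thesis by (simp add: measure_Int_set_pmf)
qed

lemma measure_pmf_Compl: "measure_pmf.prob M (- A) = 1 - measure_pmf.prob M A"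
  using measure_pmf.prob_compl[of A M] by (simp add: Compl_eq_Diff_UNIV)

lemma measure_pmf_Un:
  "measure_pmf.prob M (A \<union> B) = measure_pmf.prob M A + measure_pmf.prob M B - measure_pmf.prob M (A \<inter> B)"
  by (simp add: measure_Un3 measure_pmf.fmeasurable_eq_sets)

lemma measure_pmf_Int_eq_compl:
  "measure_pmf.prob M (X \<inter> Y) =
     1 - measure_pmf.prob M (-X) - measure_pmf.prob M (-Y) + measure_pmf.prob M (-X \<inter> -Y)"
  using measure_pmf_Compl[of M "-X \<union> -Y"] by (simp add: measure_pmf_Un)

lemma measure_pmf_Int3_eq_compl:
  "measure_pmf.prob M (X \<inter> Y \<inter> Z) =
     1 - measure_pmf.prob M (-X) - measure_pmf.prob M (-Y) - measure_pmf.prob M (-Z)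
       + measure_pmf.prob M (-X \<inter> -Y) + measure_pmf.prob M (-X \<inter> -Z)
       + measure_pmf.prob M (-Y \<inter> -Z) - measure_pmf.prob M (-X \<inter> -Y \<inter> -Z)"
proof -
  have "measure_pmf.prob M ((-X \<union> -Y) \<inter> -Z) =
      measure_pmf.prob M (-X \<inter> -Z) + measure_pmf.prob M (-Y \<inter> -Z) - measure_pmf.prob M (-X \<inter> -Y \<inter> -Z)"
    using measure_pmf_Un[of M "-X \<inter> -Z" "-Y \<inter> -Z"] by (simp add: Int_Un_distrib Int_ac)
  then show ?thesis
    using measure_pmf_Compl[of M "(-X \<union> -Y) \<union> -Z"] by (simp add: measure_pmf_Un)
qed

definition triple_prob :: "bool pmf \<Rightarrow> bool pmf \<Rightarrow> bool pmf \<Rightarrow> (bool \<Rightarrow> bool \<Rightarrow> bool \<Rightarrow> bool) \<Rightarrow> real" where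
  "triple_prob P Q R \<phi> = measure_pmf.prob (pair_pmf P (pair_pmf Q R)) {(a, b, c). \<phi> a b c}"

lemma triple_prob_bernoulli:
  assumes "0 \<le> x" "x \<le> 1" "0 \<le> y" "y \<le> 1" "0 \<le> z" "z \<le> 1"
  shows "triple_prob (bernoulli_pmf x) (bernoulli_pmf y) (bernoulli_pmf z) \<phi> =
    (\<Sum>a\<in>UNIV. \<Sum>b\<in>UNIV. \<Sum>c\<in>UNIV. if \<phi> a b c then
       (if a then x else 1 - x) * (if b then y else 1 - y) * (if c then z else 1 - z) else 0)"
proof -
  let ?M = "pair_pmf (bernoulli_pmf x) (pair_pmf (bernoulli_pmf y) (bernoulli_pmf z))"
  have "triple_prob (bernoulli_pmf x) (bernoulli_pmf y) (bernoulli_pmf z) \<phi>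
      = (\<Sum>t\<in>UNIV. if \<phi> (fst t) (fst (snd t)) (snd (snd t)) then pmf ?M t else 0)"
    unfolding triple_prob_def
    by (subst measure_measure_pmf_finite, simp, subst sum.inter_filter[symmetric])
       (auto intro!: sum.cong simp: case_prod_unfold)
  also have "\<dots> = (\<Sum>a\<in>UNIV. \<Sum>b\<in>UNIV. \<Sum>c\<in>UNIV. if \<phi> a b c then pmf ?M (a, b, c) else 0)"
    by (simp add: UNIV_Times_UNIV[symmetric] sum.cartesian_product case_prod_unfold del: UNIV_Times_UNIV)
       (auto intro!: sum.cong)
  finally show ?thesis using assms by (simp add: pmf_pair UNIV_bool)
qed

lemma measure_Pi_pmf_forall_groups:
  fixes q :: "'v \<Rightarrow> bool pmf" and G :: "'g set"
  assumes "finite V" "finite G" "i \<in> V" "j \<in> V" "k \<in> V" "i \<noteq> j" "i \<noteq> k" "j \<noteq> k"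
  shows "measure_pmf.prob (Pi_pmf (V \<times> G) False (\<lambda>(v, a). q v))
           {B. \<forall>a\<in>G. \<phi> (B (i, a)) (B (j, a)) (B (k, a))} = triple_prob (q i) (q j) (q k) \<phi> ^ card G"
  using assms(2)
proof (induction G rule: finite_induct)
  case empty
  then show ?case by simp
next
  case (insert a G)
  let ?E = "\<lambda>G. {B. \<forall>a\<in>G. \<phi> (B (i, a)) (B (j, a)) (B (k, a))}"
  let ?P = "\<lambda>G. Pi_pmf (V \<times> G) False (\<lambda>(v, a). q v)"
  let ?merge = "\<lambda>(f, g) x. if x \<in> V \<times> {a} then f x else g x"
  have "V \<times> insert a G = (V \<times> {a}) \<union> (V \<times> G)" by auto
  then have "?P (insert a G) = map_pmf ?merge (pair_pmf (?P {a}) (?P G))"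
    using insert assms by (simp only:) (rule Pi_pmf_union, auto)
  moreover have "?merge -` ?E (insert a G) = ?E {a} \<times> ?E G"
  proof -
    have "\<And>b. b \<in> G \<Longrightarrow> (b = a) = False" using insert.hyps by auto
    then show ?thesis using assms by auto
  qed
  ultimately have "measure_pmf.prob (?P (insert a G)) (?E (insert a G))
      = measure_pmf.prob (?P {a}) (?E {a}) * triple_prob (q i) (q j) (q k) \<phi> ^ card G"
    by (simp add: measure_pmf_pair_pmf_Times insert.IH)
  moreover have "measure_pmf.prob (?P {a}) (?E {a})
      = measure_pmf.prob (map_pmf (\<lambda>f. (f (i, a), f (j, a), f (k, a))) (?P {a})) {(x, y, z). \<phi> x y z}"
    by (simp add: vimage_def)
  moreover have "map_pmf (\<lambda>f. (f (i, a), f (j, a), f (k, a))) (?P {a}) = pair_pmf (q i) (pair_pmf (q j) (q k))"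
    by (subst map_pmf_Pi_pmf_triple) (use assms in auto)
  ultimately show ?case using insert by (simp add: triple_prob_def)
qed

section \<open>Finite differences of powers\<close>

text \<open>Each bound follows from the previous one by the mean value theorem in one increment.\<close>

lemma power_diff_bounds:
  fixes Y d :: real and k :: nat
  assumes "0 \<le> Y" "0 \<le> d" "Y + d \<le> 1"
  shows "real k * d * Y ^ (k - 1) \<le> (Y + d) ^ k - Y ^ k \<and> (Y + d) ^ k - Y ^ k \<le> real k * d"
proof (cases "d = 0")
  case True then show ?thesis by simp
next
  case False
  hence "Y < Y + d" using assms by simp
  from MVT2[OF this, of "\<lambda>t. t ^ k" "\<lambda>t. real k * t ^ (k - 1)"]
  obtain z where z: "Y < z" "z < Y + d" "(Y + d) ^ k - Y ^ k = (Y + d - Y) * (real k * z ^ (k - 1))"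
    by (auto intro!: derivative_eq_intros)
  have "Y ^ (k - 1) \<le> z ^ (k - 1)" using z assms by (intro power_mono) auto
  moreover have "z ^ (k - 1) \<le> 1" using z assms by (intro power_le_one) auto
  ultimately have "real k * Y ^ (k - 1) \<le> real k * z ^ (k - 1)" "real k * z ^ (k - 1) \<le> real k * 1"
    by (auto intro!: mult_left_mono simp del: mult_1_right)
  hence "d * (real k * Y ^ (k - 1)) \<le> d * (real k * z ^ (k - 1))" "d * (real k * z ^ (k - 1)) \<le> d * (real k * 1)"
    using assms by (auto intro!: mult_left_mono)
  thus ?thesis using z by (simp add: mult_ac)
qed

lemma power_diff2_bounds:
  fixes Y b c :: real and k :: nat
  assumes "0 \<le> Y" "0 \<le> b" "0 \<le> c" "Y + b + c \<le> 1"
  shows "real k * (real k - 1) * b * c * Y ^ (k - 2) \<le> (Y+b+c)^k - (Y+b)^k - (Y+c)^k + Y^k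
       \<and> (Y+b+c)^k - (Y+b)^k - (Y+c)^k + Y^k \<le> real k * (real k - 1) * b * c"
proof (cases "c = 0 \<or> k = 0")
  case True then show ?thesis by auto
next
  case False
  hence c: "c > 0" and k: "k \<ge> 1" using assms by auto
  hence "Y < Y + c" by simp
  have der: "\<And>t. Y \<le> t \<Longrightarrow> t \<le> Y + c \<Longrightarrow> ((\<lambda>t. (t + b) ^ k - t ^ k) has_real_derivative (real k * ((t + b) ^ (k - 1) - t ^ (k - 1)))) (at t)"
    by (auto intro!: derivative_eq_intros simp: algebra_simps)
  from MVT2[OF \<open>Y < Y + c\<close> der]
  obtain z where z: "Y < z" "z < Y + c"
    "((Y + c) + b) ^ k - (Y + c) ^ k - ((Y + b) ^ k - Y ^ k) = (Y + c - Y) * (real k * ((z + b) ^ (k - 1) - z ^ (k - 1)))"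
    by blast
  have e: "(Y+b+c)^k - (Y+b)^k - (Y+c)^k + Y^k = c * (real k * ((z + b) ^ (k - 1) - z ^ (k - 1)))"
    using z(3) by (simp add: algebra_simps)
  have p1: "real (k-1) * b * z ^ (k - 1 - 1) \<le> (z + b) ^ (k-1) - z ^ (k-1) \<and> (z + b) ^ (k-1) - z ^ (k-1) \<le> real (k-1) * b"
    using power_diff_bounds[of z b "k-1"] z assms by auto
  have kk: "real (k - 1) = real k - 1" "k - 1 - 1 = k - 2" using k by auto
  have "Y ^ (k - 2) \<le> z ^ (k - 2)" using z assms by (intro power_mono) auto
  hence "real k * (real k - 1) * b * c * Y ^ (k - 2) \<le> real k * (real k - 1) * b * c * z ^ (k - 2)"
    using k assms by (intro mult_left_mono) auto
  also have "\<dots> = c * (real k * (real (k-1) * b * z ^ (k - 1 - 1)))" using kk by (simp add: mult_ac)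
  also have "\<dots> \<le> c * (real k * ((z + b) ^ (k - 1) - z ^ (k - 1)))"
    using p1 c by (intro mult_left_mono) auto
  finally have lo: "real k * (real k - 1) * b * c * Y ^ (k - 2) \<le> (Y+b+c)^k - (Y+b)^k - (Y+c)^k + Y^k"
    using e by simp
  have "c * (real k * ((z + b) ^ (k - 1) - z ^ (k - 1))) \<le> c * (real k * (real (k-1) * b))"
    using p1 c by (intro mult_left_mono) auto
  hence "(Y+b+c)^k - (Y+b)^k - (Y+c)^k + Y^k \<le> real k * (real k - 1) * b * c"
    using e kk by (simp add: mult_ac)
  with lo show ?thesis by simp
qed

lemma power_diff3_bounds:
  fixes Y a b c :: real and k :: nat
  assumes "0 \<le> Y" "0 \<le> a" "0 \<le> b" "0 \<le> c" "Y + a + b + c \<le> 1"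
  shows "0 \<le> (Y+a+b+c)^k - (Y+b+c)^k - (Y+a+c)^k - (Y+a+b)^k + (Y+a)^k + (Y+b)^k + (Y+c)^k - Y^k
       \<and> (Y+a+b+c)^k - (Y+b+c)^k - (Y+a+c)^k - (Y+a+b)^k + (Y+a)^k + (Y+b)^k + (Y+c)^k - Y^k
          \<le> real k ^ 3 * a * b * c"
proof (cases "a = 0 \<or> k = 0")
  case True then show ?thesis by (auto simp: algebra_simps)
next
  case False
  hence a: "a > 0" and k: "k \<ge> 1" using assms by auto
  hence "Y < Y + a" by simp
  have der: "\<And>t. Y \<le> t \<Longrightarrow> t \<le> Y + a \<Longrightarrow> ((\<lambda>t. (t+b+c)^k - (t+b)^k - (t+c)^k + t^k) has_real_derivative
      (real k * ((t+b+c)^(k-1) - (t+b)^(k-1) - (t+c)^(k-1) + t^(k-1)))) (at t)"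
    by (auto intro!: derivative_eq_intros simp: algebra_simps)
  from MVT2[OF \<open>Y < Y + a\<close> der]
  obtain z where z: "Y < z" "z < Y + a"
    "((Y+a)+b+c)^k - ((Y+a)+b)^k - ((Y+a)+c)^k + (Y+a)^k - ((Y+b+c)^k - (Y+b)^k - (Y+c)^k + Y^k)
      = (Y + a - Y) * (real k * ((z+b+c)^(k-1) - (z+b)^(k-1) - (z+c)^(k-1) + z^(k-1)))"
    by blast
  have e: "(Y+a+b+c)^k - (Y+b+c)^k - (Y+a+c)^k - (Y+a+b)^k + (Y+a)^k + (Y+b)^k + (Y+c)^k - Y^k
     = a * (real k * ((z+b+c)^(k-1) - (z+b)^(k-1) - (z+c)^(k-1) + z^(k-1)))"
    using z(3) by (simp add: algebra_simps)
  have p2: "real (k-1) * (real (k-1) - 1) * b * c * z ^ (k - 1 - 2) \<le> (z+b+c)^(k-1) - (z+b)^(k-1) - (z+c)^(k-1) + z^(k-1)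
       \<and> (z+b+c)^(k-1) - (z+b)^(k-1) - (z+c)^(k-1) + z^(k-1) \<le> real (k-1) * (real (k-1) - 1) * b * c"
    using power_diff2_bounds[of z b c "k-1"] z assms by auto
  have nn: "0 \<le> real (k-1) * (real (k-1) - 1) * b * c * z ^ (k - 1 - 2)"
    using assms z by (cases "k \<le> 1") (auto intro!: mult_nonneg_nonneg)
  have lo: "0 \<le> (Y+a+b+c)^k - (Y+b+c)^k - (Y+a+c)^k - (Y+a+b)^k + (Y+a)^k + (Y+b)^k + (Y+c)^k - Y^k"
    unfolding e using p2 nn a by (intro mult_nonneg_nonneg) auto
  have "a * (real k * ((z+b+c)^(k-1) - (z+b)^(k-1) - (z+c)^(k-1) + z^(k-1)))
      \<le> a * (real k * (real (k-1) * (real (k-1) - 1) * b * c))"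
    using p2 a by (intro mult_left_mono) auto
  also have "\<dots> \<le> a * (real k * (real k * real k * b * c))"
  proof -
    have "real (k-1) * (real (k-1) - 1) \<le> real k * real k" using k
      by (cases "k = 1") (auto intro!: mult_mono simp: of_nat_diff)
    hence "real (k-1) * (real (k-1) - 1) * (b * c) \<le> real k * real k * (b * c)"
      using assms by (intro mult_right_mono) auto
    thus ?thesis using a by (intro mult_left_mono) (auto simp: mult_ac)
  qed
  finally show ?thesis using lo e by (simp add: power3_eq_cube mult_ac)
qed

section \<open>The conditional clustering coefficient in closed form\<close>

text \<open>P(E_ik \<inter> E_jk) and P(E_ij \<inter> E_ik \<inter> E_jk) when i, j, k join each of m groups independently
  with probabilities x, y, z; the terms come from inclusion--exclusion over the complements.\<close>

definition two_shares_prob :: "nat \<Rightarrow> real \<Rightarrow> real \<Rightarrow> real \<Rightarrow> real" where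
  "two_shares_prob m x y z = 1 - (1 - x*z) ^ m - (1 - y*z) ^ m + (1 - (x*z + y*z - x*y*z)) ^ m"

definition three_shares_prob :: "nat \<Rightarrow> real \<Rightarrow> real \<Rightarrow> real \<Rightarrow> real" where
  "three_shares_prob m x y z =
     1 - (1 - x*y) ^ m - (1 - x*z) ^ m - (1 - y*z) ^ m
       + (1 - (x*z + y*z - x*y*z)) ^ m + (1 - (x*y + x*z - x*y*z)) ^ m
       + (1 - (x*y + y*z - x*y*z)) ^ m - (1 - (x*y + x*z + y*z - 2*x*y*z)) ^ m"

text \<open>bernoulli_pmf clamps its parameter to [0, 1], and edge_prob is negative for negative weights.\<close>

definition clamped_edge_prob :: "real \<Rightarrow> real \<Rightarrow> nat \<Rightarrow> real \<Rightarrow> real" where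
  "clamped_edge_prob \<alpha> \<gamma> n w = max 0 (edge_prob \<alpha> \<gamma> n w)"

definition cbar_of_weights :: "real \<Rightarrow> real \<Rightarrow> real \<Rightarrow> nat \<Rightarrow> real \<Rightarrow> real \<Rightarrow> real \<Rightarrow> real" where
  "cbar_of_weights \<alpha> \<beta> \<gamma> n a b c =
     (let m = num_groups \<alpha> \<beta> n; p = clamped_edge_prob \<alpha> \<gamma> n in
      three_shares_prob m (p a) (p b) (p c) / two_shares_prob m (p a) (p b) (p c))"

lemma cbar_eq_cbar_of_weights:
  assumes "i \<in> {1..n}" "j \<in> {1..n}" "k \<in> {1..n}" "i \<noteq> j" "i \<noteq> k" "j \<noteq> k"
  shows "cbar \<alpha> \<beta> \<gamma> n W i j k = cbar_of_weights \<alpha> \<beta> \<gamma> n (W i) (W j) (W k)"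
proof -
  define m where "m = num_groups \<alpha> \<beta> n"
  define p where "p = clamped_edge_prob \<alpha> \<gamma> n"
  define M where "M = bip_pmf \<alpha> \<beta> \<gamma> n W"
  define every_group where "every_group (\<phi> :: bool \<Rightarrow> bool \<Rightarrow> bool \<Rightarrow> bool) =
    {B :: nat \<times> nat \<Rightarrow> bool. \<forall>a\<in>{1..m}. \<phi> (B (i, a)) (B (j, a)) (B (k, a))}" for \<phi>
  have p01: "0 \<le> p v" "p v \<le> 1" for v
    by (auto simp: p_def clamped_edge_prob_def edge_prob_def)
  have "M = Pi_pmf ({1..n} \<times> {1..m}) False (\<lambda>(v, a). bernoulli_pmf (p (W v)))"
    unfolding M_def bip_pmf_def m_def p_def clamped_edge_prob_def
    by (intro Pi_pmf_cong refl) (auto intro!: pmf_eqI simp: bernoulli_pmf.rep_eq edge_prob_def)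
  then have every_group_prob: "measure_pmf.prob M (every_group \<phi>) =
      triple_prob (bernoulli_pmf (p (W i))) (bernoulli_pmf (p (W j))) (bernoulli_pmf (p (W k))) \<phi> ^ m" for \<phi>
    unfolding every_group_def using measure_Pi_pmf_forall_groups[of "{1..n}" "{1..m}" i j k] assms by simp
  note every_group_bernoulli = every_group_prob[unfolded triple_prob_bernoulli[OF p01 p01 p01]]
  have every_group_Int: "every_group \<phi> \<inter> every_group \<psi> = every_group (\<lambda>a b c. \<phi> a b c \<and> \<psi> a b c)" for \<phi> \<psi>
    by (auto simp: every_group_def)
  have compl: "- share_group m i j = every_group (\<lambda>a b c. \<not> (a \<and> b))"
    "- share_group m i k = every_group (\<lambda>a b c. \<not> (a \<and> c))"
    "- share_group m j k = every_group (\<lambda>a b c. \<not> (b \<and> c))"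
    by (auto simp: every_group_def share_group_def)
  have "measure_pmf.prob M (share_group m i k \<inter> share_group m j k)
      = two_shares_prob m (p (W i)) (p (W j)) (p (W k))"
    unfolding measure_pmf_Int_eq_compl compl every_group_Int every_group_bernoulli two_shares_prob_def
    by (simp add: UNIV_bool algebra_simps)
  moreover have "measure_pmf.prob M (share_group m i j \<inter> share_group m i k \<inter> share_group m j k)
      = three_shares_prob m (p (W i)) (p (W j)) (p (W k))"
    unfolding measure_pmf_Int3_eq_compl compl every_group_Int every_group_bernoulli three_shares_prob_def
    by (simp add: UNIV_bool algebra_simps)
  ultimately show ?thesis
    by (simp add: cbar_def cbar_of_weights_def M_def m_def p_def Let_def)
qed

lemma cbar_bounds: "0 \<le> cbar \<alpha> \<beta> \<gamma> n W i j k" "cbar \<alpha> \<beta> \<gamma> n W i j k \<le> 1"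
proof -
  let ?M = "bip_pmf \<alpha> \<beta> \<gamma> n W" and ?m = "num_groups \<alpha> \<beta> n"
  have "measure_pmf.prob ?M (share_group ?m i j \<inter> share_group ?m i k \<inter> share_group ?m j k)
      \<le> measure_pmf.prob ?M (share_group ?m i k \<inter> share_group ?m j k)"
    by (intro measure_pmf.finite_measure_mono) auto
  then show "0 \<le> cbar \<alpha> \<beta> \<gamma> n W i j k" "cbar \<alpha> \<beta> \<gamma> n W i j k \<le> 1"
    unfolding cbar_def Let_def by (auto simp: divide_le_eq_1 less_le)
qed

lemma cbar_of_weights_bounds:
  assumes "3 \<le> n"
  shows "0 \<le> cbar_of_weights \<alpha> \<beta> \<gamma> n a b c" "cbar_of_weights \<alpha> \<beta> \<gamma> n a b c \<le> 1"
proof -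
  define W where "W v = (if v = 1 then a else if v = 2 then b else c)" for v :: nat
  have "cbar \<alpha> \<beta> \<gamma> n W 1 2 3 = cbar_of_weights \<alpha> \<beta> \<gamma> n a b c"
    using assms by (subst cbar_eq_cbar_of_weights) (auto simp: W_def)
  then show "0 \<le> cbar_of_weights \<alpha> \<beta> \<gamma> n a b c" "cbar_of_weights \<alpha> \<beta> \<gamma> n a b c \<le> 1"
    using cbar_bounds[of \<alpha> \<beta> \<gamma> n W 1 2 3] by simp_all
qed

section \<open>Bounds on the closed form\<close>

lemma two_shares_prob_bounds:
  fixes x y z :: real and m :: nat
  assumes xyz: "0 \<le> x" "x \<le> 1" "0 \<le> y" "y \<le> 1" "0 \<le> z" "z \<le> 1"
    and small: "x*y + x*z + y*z \<le> 1"
  defines "P \<equiv> (1 - x*y - x*z - y*z) ^ m" and "K \<equiv> 1 + (real m - 1) * z"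
  shows "real m * (x*y*z) * K * P \<le> two_shares_prob m x y z"
    and "two_shares_prob m x y z \<le> real m * (x*y*z) * K"
proof -
  define b where "b = x*z"
  define c where "c = y*z"
  define d where "d = x*y*z"
  define Y where "Y = 1 - b - c"
  have "y * (x*z) \<le> x*z" using xyz by (intro mult_left_le_one_le) auto
  then have pos: "0 \<le> b" "0 \<le> c" "0 \<le> d" "d \<le> b" "x*y \<ge> 0"
    using xyz by (auto simp: b_def c_def d_def mult_ac)
  have "0 \<le> Y - x*y" "Y \<le> 1"
    using small pos unfolding Y_def b_def c_def by linarith+
  then have Y: "0 \<le> Y" "Y \<le> 1" "Y ^ m \<ge> P"
    using pos unfolding P_def Y_def b_def c_def by (auto intro!: power_mono)
  have D: "two_shares_prob m x y z = ((Y+b+c)^m - (Y+b)^m - (Y+c)^m + Y^m) + ((Y+d)^m - Y^m)"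
    unfolding two_shares_prob_def Y_def b_def c_def d_def by (simp add: algebra_simps)
  have second: "real m * (real m - 1) * b * c * Y ^ (m - 2) \<le> (Y+b+c)^m - (Y+b)^m - (Y+c)^m + Y^m"
    "(Y+b+c)^m - (Y+b)^m - (Y+c)^m + Y^m \<le> real m * (real m - 1) * b * c"
    using power_diff2_bounds[of Y b c m] Y pos by (auto simp: Y_def)
  have first: "real m * d * Y ^ (m - 1) \<le> (Y + d) ^ m - Y ^ m" "(Y + d) ^ m - Y ^ m \<le> real m * d"
    using power_diff_bounds[of Y d m] Y pos by (auto simp: Y_def)
  have bc: "real m * (real m - 1) * b * c = real m * d * (K - 1)"
    unfolding K_def b_def c_def d_def by (simp add: algebra_simps)
  have m1: "real m * (real m - 1) \<ge> 0" by (cases m) auto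
  have "Y ^ (m - 2) \<ge> P" "Y ^ (m - 1) \<ge> P"
    using Y by (auto intro: order_trans[OF _ power_decreasing])
  then have "real m * (real m - 1) * b * c * P \<le> real m * (real m - 1) * b * c * Y ^ (m - 2)"
    "real m * d * P \<le> real m * d * Y ^ (m - 1)"
    using pos m1 by (auto intro!: mult_left_mono)
  moreover have "real m * d * K * P = real m * (real m - 1) * b * c * P + real m * d * P"
    unfolding K_def b_def c_def d_def by (simp add: algebra_simps)
  ultimately show "real m * d * K * P \<le> two_shares_prob m x y z"
    using D first second by linarith
  show "two_shares_prob m x y z \<le> real m * d * K"
    using D first second bc by (simp add: algebra_simps)
qed

lemma three_shares_prob_bounds:
  fixes x y z :: real and m :: nat
  assumes xyz: "0 \<le> x" "x \<le> 1" "0 \<le> y" "y \<le> 1" "0 \<le> z" "z \<le> 1"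
    and small: "x*y + x*z + y*z \<le> 1"
  defines "P \<equiv> (1 - x*y - x*z - y*z) ^ m"
  shows "real m * (x*y*z) * (3 * P - 2) \<le> three_shares_prob m x y z"
    and "three_shares_prob m x y z \<le> real m ^ 3 * (x*y*z)^2 + real m * (x*y*z) * (3 - 2 * P)"
proof -
  define a where "a = x*y"
  define b where "b = x*z"
  define c where "c = y*z"
  define d where "d = x*y*z"
  define Z where "Z = 1 - a - b - c"
  define u where "u = real m * d"
  have "y * (x*z) \<le> x*z" "z * (x*y) \<le> x*y" using xyz by (intro mult_left_le_one_le; simp)+
  then have pos: "0 \<le> a" "0 \<le> b" "0 \<le> c" "0 \<le> d" "d \<le> a" "d \<le> b"
    using xyz by (auto simp: a_def b_def c_def d_def mult_ac)
  have "Z \<le> 1" using pos unfolding Z_def by linarith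
  then have Z: "0 \<le> Z" "Z \<le> 1" "Z + a + b + c = 1"
    using small unfolding Z_def a_def b_def c_def by linarith+
  have P: "P = Z ^ m" unfolding P_def Z_def a_def b_def c_def by simp
  define E where "E = (Z+a+b+c)^m - (Z+b+c)^m - (Z+a+c)^m - (Z+a+b)^m + (Z+a)^m + (Z+b)^m + (Z+c)^m - Z^m"
  define T where "T t = (Z+t+d)^m - (Z+t)^m" for t
  have N: "three_shares_prob m x y z = E + T a + T b + T c - ((Z + 2*d)^m - Z^m)"
    unfolding three_shares_prob_def E_def T_def Z_def a_def b_def c_def d_def
    by (simp add: algebra_simps)
  have E: "0 \<le> E" "E \<le> real m ^ 3 * a * b * c"
    unfolding E_def using power_diff3_bounds[of Z a b c m] Z pos by auto
  have T: "u * P \<le> T t" "T t \<le> u" if "0 \<le> t" "t + d \<le> a + b + c" for t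
  proof -
    have "Z ^ m \<le> (Z+t) ^ (m - 1)"
      using Z pos that by (intro order_trans[OF power_decreasing power_mono]) auto
    then have "u * P \<le> real m * d * (Z+t) ^ (m - 1)"
      unfolding u_def P using pos by (intro mult_left_mono) auto
    then show "u * P \<le> T t" "T t \<le> u"
      unfolding T_def u_def using power_diff_bounds[of "Z+t" d m] Z pos that by auto
  qed
  have "Z ^ m \<le> Z ^ (m - 1)" using Z by (intro power_decreasing) auto
  then have "2 * u * P \<le> real m * (2*d) * Z ^ (m - 1)"
    unfolding u_def P using pos by (simp add: mult_left_mono)
  then have T4: "2 * u * P \<le> (Z + 2*d)^m - Z^m" "(Z + 2*d)^m - Z^m \<le> 2 * u"
    unfolding u_def using power_diff_bounds[of Z "2*d" m] Z pos by auto
  have "T a \<ge> u * P" "T b \<ge> u * P" "T c \<ge> u * P" "T a \<le> u" "T b \<le> u" "T c \<le> u"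
    using T pos by auto
  moreover have "real m ^ 3 * a * b * c = real m ^ 3 * d^2"
    unfolding a_def b_def c_def d_def by algebra
  moreover have "u * (3 * P - 2) = 3 * (u * P) - 2 * u" "u * (3 - 2 * P) = 3 * u - 2 * (u * P)"
    by (simp_all add: algebra_simps)
  ultimately show "real m * d * (3 * P - 2) \<le> three_shares_prob m x y z"
    and "three_shares_prob m x y z \<le> real m ^ 3 * d^2 + real m * d * (3 - 2 * P)"
    unfolding N u_def[symmetric] using E T4 by linarith+
qed

lemma three_shares_div_two_shares_bounds:
  fixes x y z :: real and m :: nat
  defines "e \<equiv> real m * (x*y + x*z + y*z)" and "K \<equiv> 1 + (real m - 1) * z"
  assumes xyz: "0 < x" "x \<le> 1" "0 < y" "y \<le> 1" "0 < z" "z \<le> 1" and m: "m \<ge> 2"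
    and e_small: "e \<le> 1/4"
  shows "(1 - 3*e) / K \<le> three_shares_prob m x y z / two_shares_prob m x y z"
    and "three_shares_prob m x y z / two_shares_prob m x y z \<le> (2*e + (1 + 2*e) / K) / (1 - e)"
proof -
  define P where "P = (1 - x*y - x*z - y*z) ^ m"
  define d where "d = x*y*z"
  define u where "u = real m * d"
  let ?N = "three_shares_prob m x y z" and ?D = "two_shares_prob m x y z"
  have pos: "0 < x*y" "0 < x*z" "0 < y*z" "0 < d" "0 < u"
    using xyz m by (simp_all add: d_def u_def)
  have e_nonneg: "0 \<le> e" unfolding e_def using pos by simp
  have "2 * (x*y + x*z + y*z) \<le> e"
    using m pos unfolding e_def by (intro mult_right_mono) auto
  then have small: "x*y + x*z + y*z \<le> 1/8" using e_small by argo
  have "1 + real m * (- (x*y + x*z + y*z)) \<le> (1 + (- (x*y + x*z + y*z))) ^ m"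
    using small by (intro Bernoulli_inequality) linarith
  then have "1 - e \<le> P" unfolding P_def e_def by (simp add: algebra_simps)
  then have P: "1 - e \<le> P" "0 < P" using e_small by linarith+
  have K: "1 \<le> K" unfolding K_def using m xyz by simp
  have "0 \<le> x" "x \<le> 1" "0 \<le> y" "y \<le> 1" "0 \<le> z" "z \<le> 1" "x*y + x*z + y*z \<le> 1"
    using xyz small by auto
  note D = two_shares_prob_bounds[where m = m, OF this, folded P_def K_def d_def u_def]
    and N = three_shares_prob_bounds[where m = m, OF this, folded P_def d_def u_def]
  have "0 < u * K * P" using pos K P by simp
  then have D_pos: "0 < ?D" using D by linarith
  have "(1 - 3*e) / K \<le> (3*P - 2) / K" using P K by (intro divide_right_mono) auto
  also have "\<dots> = u * (3*P - 2) / (u * K)" using pos by simp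
  also have "\<dots> \<le> u * (3*P - 2) / ?D"
    using D D_pos P e_small pos by (intro divide_left_mono) auto
  also have "\<dots> \<le> ?N / ?D" using N D_pos by (intro divide_right_mono) auto
  finally show "(1 - 3*e) / K \<le> ?N / ?D" .
  have mxy: "real m * (x*y) \<le> e" unfolding e_def using pos by (intro mult_left_mono) auto
  have "2 * z \<le> real m * z" using m xyz by (intro mult_right_mono) auto
  then have mz: "real m * z \<le> 2 * K" unfolding K_def by (simp add: algebra_simps)
  have "real m * (x*y) * (real m * z) \<le> e * (2 * K)"
    by (rule mult_mono[OF mxy mz]) (use pos xyz e_nonneg in auto)
  then have mmd: "real m * real m * d \<le> 2 * e * K" by (simp add: d_def mult_ac)
  have "0 \<le> u * (3*P - 2)" using pos P e_small by simp
  then have N_nonneg: "0 \<le> ?N" using N(1) by linarith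
  have "?N / ?D \<le> ?N / (u * K * P)"
    using D D_pos N_nonneg pos K P by (intro divide_left_mono) auto
  also have "\<dots> \<le> (real m ^ 3 * d^2 + u * (3 - 2*P)) / (u * K * P)"
    using N pos K P by (intro divide_right_mono) auto
  also have "\<dots> = (real m * real m * d + (3 - 2*P)) / (K * P)"
    using pos K P m by (simp add: u_def field_simps power2_eq_square power3_eq_cube)
  also have "\<dots> \<le> (2*e*K + 1 + 2*e) / (K * (1 - e))"
    using mmd K P e_small e_nonneg by (intro frac_le) auto
  also have "\<dots> = (2*e + (1 + 2*e) / K) / (1 - e)"
    using K by (simp add: field_simps)
  finally show "?N / ?D \<le> (2*e + (1 + 2*e) / K) / (1 - e)" .
qed

section \<open>Asymptotics of the group structure\<close>

definition edge_scale :: "real \<Rightarrow> nat \<Rightarrow> real" where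
  "edge_scale \<alpha> n = real n powr (- (1 + \<alpha>) / 2)"

lemma num_groups_bounds:
  assumes "0 \<le> \<beta>"
  shows "\<beta> * real n powr \<alpha> - 1 \<le> real (num_groups \<alpha> \<beta> n)"
    and "real (num_groups \<alpha> \<beta> n) \<le> \<beta> * real n powr \<alpha>"
proof -
  have "real (num_groups \<alpha> \<beta> n) = real_of_int \<lfloor>\<beta> * real n powr \<alpha>\<rfloor>"
    unfolding num_groups_def using assms by simp
  then show "\<beta> * real n powr \<alpha> - 1 \<le> real (num_groups \<alpha> \<beta> n)"
    and "real (num_groups \<alpha> \<beta> n) \<le> \<beta> * real n powr \<alpha>"
    by linarith+
qed

lemma num_groups_at_top:
  assumes "0 < \<alpha>" "0 < \<beta>"
  shows "filterlim (\<lambda>n. real (num_groups \<alpha> \<beta> n)) at_top sequentially"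
proof -
  have "filterlim (\<lambda>n. \<beta> * real n powr \<alpha> - 1) at_top sequentially"
    using assms by real_asymp
  then show ?thesis
    by (rule filterlim_at_top_mono) (use num_groups_bounds(1) assms in auto)
qed

lemma edge_scale_tendsto_0: "0 < \<alpha> \<Longrightarrow> edge_scale \<alpha> \<longlonglongrightarrow> 0"
  unfolding edge_scale_def by real_asymp

lemma num_groups_edge_scale_sq_tendsto_0:
  assumes "0 < \<alpha>" "0 \<le> \<beta>"
  shows "(\<lambda>n. real (num_groups \<alpha> \<beta> n) * edge_scale \<alpha> n ^ 2) \<longlonglongrightarrow> 0"
proof (rule tendsto_sandwich[of "\<lambda>_. 0"])
  show "(\<lambda>n. \<beta> * real n powr \<alpha> * edge_scale \<alpha> n ^ 2) \<longlonglongrightarrow> 0"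
    unfolding edge_scale_def power2_eq_square using assms by real_asymp
  show "eventually (\<lambda>n. real (num_groups \<alpha> \<beta> n) * edge_scale \<alpha> n ^ 2
                        \<le> \<beta> * real n powr \<alpha> * edge_scale \<alpha> n ^ 2) sequentially"
    using num_groups_bounds(2)[OF assms(2)] by (auto intro!: always_eventually mult_right_mono)
qed auto

lemma num_groups_edge_scale_bounds:
  assumes "0 \<le> \<beta>"
  shows "\<beta> * real n powr ((\<alpha> - 1) / 2) - edge_scale \<alpha> n \<le> real (num_groups \<alpha> \<beta> n) * edge_scale \<alpha> n"
    and "real (num_groups \<alpha> \<beta> n) * edge_scale \<alpha> n \<le> \<beta> * real n powr ((\<alpha> - 1) / 2)"
proof -
  have "real n powr \<alpha> * edge_scale \<alpha> n = real n powr ((\<alpha> - 1) / 2)"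
    unfolding edge_scale_def powr_add[symmetric] by (simp add: field_simps)
  moreover have "(\<beta> * real n powr \<alpha> - 1) * edge_scale \<alpha> n \<le> real (num_groups \<alpha> \<beta> n) * edge_scale \<alpha> n"
    "real (num_groups \<alpha> \<beta> n) * edge_scale \<alpha> n \<le> \<beta> * real n powr \<alpha> * edge_scale \<alpha> n"
    using num_groups_bounds[OF assms, where \<alpha> = \<alpha> and n = n]
    by (auto intro!: mult_right_mono simp: edge_scale_def)
  ultimately show "\<beta> * real n powr ((\<alpha> - 1) / 2) - edge_scale \<alpha> n \<le> real (num_groups \<alpha> \<beta> n) * edge_scale \<alpha> n"
    and "real (num_groups \<alpha> \<beta> n) * edge_scale \<alpha> n \<le> \<beta> * real n powr ((\<alpha> - 1) / 2)"
    by (simp_all add: algebra_simps)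
qed

lemma num_groups_edge_scale_tendsto_0:
  assumes "0 < \<alpha>" "\<alpha> < 1" "0 \<le> \<beta>"
  shows "(\<lambda>n. real (num_groups \<alpha> \<beta> n) * edge_scale \<alpha> n) \<longlonglongrightarrow> 0"
proof (rule tendsto_sandwich)
  show "(\<lambda>n. \<beta> * real n powr ((\<alpha> - 1) / 2) - edge_scale \<alpha> n) \<longlonglongrightarrow> 0"
    "(\<lambda>n. \<beta> * real n powr ((\<alpha> - 1) / 2)) \<longlonglongrightarrow> 0"
    unfolding edge_scale_def using assms by real_asymp+
qed (intro always_eventually allI num_groups_edge_scale_bounds assms)+

lemma num_groups_edge_scale_tendsto_beta:
  assumes "0 \<le> \<beta>"
  shows "(\<lambda>n. real (num_groups 1 \<beta> n) * edge_scale 1 n) \<longlonglongrightarrow> \<beta>"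
proof (rule tendsto_sandwich)
  show "(\<lambda>n. \<beta> * real n powr ((1 - 1) / 2) - edge_scale 1 n) \<longlonglongrightarrow> \<beta>"
    "(\<lambda>n. \<beta> * real n powr ((1 - 1) / 2)) \<longlonglongrightarrow> \<beta>"
    unfolding edge_scale_def by real_asymp+
qed (intro always_eventually allI num_groups_edge_scale_bounds assms)+

lemma num_groups_edge_scale_at_top:
  assumes "1 < \<alpha>" "0 < \<beta>"
  shows "filterlim (\<lambda>n. real (num_groups \<alpha> \<beta> n) * edge_scale \<alpha> n) at_top sequentially"
proof (rule filterlim_at_top_mono)
  show "filterlim (\<lambda>n. \<beta> * real n powr ((\<alpha> - 1) / 2) - edge_scale \<alpha> n) at_top sequentially"
    unfolding edge_scale_def using assms by real_asymp
qed (use num_groups_edge_scale_bounds(1) assms in auto)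

definition clustering_limit :: "real \<Rightarrow> real \<Rightarrow> real \<Rightarrow> real \<Rightarrow> real" where
  "clustering_limit \<alpha> \<beta> \<gamma> w = (if \<alpha> < 1 then 1 else if \<alpha> = 1 then 1 / (1 + \<beta> * \<gamma> * w) else 0)"

lemma tendsto_clustering_limit:
  assumes "0 < \<alpha>" "0 < \<beta>" "0 < \<gamma>" "0 < w"
  shows "(\<lambda>n. 1 / (1 + (real (num_groups \<alpha> \<beta> n) - 1) * (\<gamma> * w * edge_scale \<alpha> n)))
           \<longlonglongrightarrow> clustering_limit \<alpha> \<beta> \<gamma> w"
proof -
  define ms where "ms n = real (num_groups \<alpha> \<beta> n) * edge_scale \<alpha> n" for n
  have denom: "1 + (real (num_groups \<alpha> \<beta> n) - 1) * (\<gamma> * w * edge_scale \<alpha> n)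
      = 1 + \<gamma> * w * (ms n - edge_scale \<alpha> n)" for n
    by (simp add: ms_def algebra_simps)
  note s = edge_scale_tendsto_0[OF assms(1)]
  consider "\<alpha> < 1" | "\<alpha> = 1" | "1 < \<alpha>" by linarith
  then show ?thesis
  proof cases
    case 1
    have "(\<lambda>n. 1 / (1 + \<gamma> * w * (ms n - edge_scale \<alpha> n))) \<longlonglongrightarrow> 1 / (1 + \<gamma> * w * (0 - 0))"
      using num_groups_edge_scale_tendsto_0[of \<alpha> \<beta>] 1 assms unfolding ms_def
      by (intro tendsto_intros s) auto
    with 1 show ?thesis by (simp add: denom clustering_limit_def)
  next
    case 2
    have "0 < \<gamma> * w * \<beta>" using assms by simp
    then have pos: "1 + \<gamma> * w * \<beta> \<noteq> 0" by linarith
    have "(\<lambda>n. 1 / (1 + \<gamma> * w * (ms n - edge_scale \<alpha> n))) \<longlonglongrightarrow> 1 / (1 + \<gamma> * w * (\<beta> - 0))"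
      using num_groups_edge_scale_tendsto_beta[of \<beta>] 2 assms unfolding ms_def
      by (intro tendsto_intros s) (use pos in auto)
    with 2 show ?thesis unfolding denom by (simp add: clustering_limit_def mult_ac)
  next
    case 3
    have "filterlim (\<lambda>n. - edge_scale \<alpha> n + ms n) at_top sequentially"
      unfolding ms_def
      by (rule filterlim_tendsto_add_at_top[OF tendsto_minus[OF s]
            num_groups_edge_scale_at_top[OF 3 assms(2)]])
    then have "filterlim (\<lambda>n. 1 + \<gamma> * w * (ms n - edge_scale \<alpha> n)) at_top sequentially"
      using assms unfolding diff_conv_add_uminus add.commute[of "ms _"]
      by (intro filterlim_tendsto_add_at_top[OF tendsto_const]
          filterlim_tendsto_pos_mult_at_top[OF tendsto_const]) auto
    then have "(\<lambda>n. 1 / (1 + \<gamma> * w * (ms n - edge_scale \<alpha> n))) \<longlonglongrightarrow> 0"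
      unfolding divide_inverse by (simp add: tendsto_inverse_0_at_top)
    with 3 show ?thesis by (simp add: denom clustering_limit_def)
  qed
qed

lemma eventually_clamped_edge_prob:
  assumes "0 < \<alpha>" "0 < \<gamma>" "0 < w"
  shows "eventually (\<lambda>n. clamped_edge_prob \<alpha> \<gamma> n w = \<gamma> * w * edge_scale \<alpha> n
                         \<and> 0 < \<gamma> * w * edge_scale \<alpha> n \<and> \<gamma> * w * edge_scale \<alpha> n \<le> 1) sequentially"
proof -
  have "(\<lambda>n. \<gamma> * w * edge_scale \<alpha> n) \<longlonglongrightarrow> \<gamma> * w * 0"
    by (intro tendsto_intros edge_scale_tendsto_0 assms)
  then have "eventually (\<lambda>n. \<gamma> * w * edge_scale \<alpha> n < 1) sequentially"
    by (intro order_tendstoD(2)) auto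
  then show ?thesis
    using eventually_gt_at_top[of 0]
    by eventually_elim (use assms in \<open>auto simp: clamped_edge_prob_def edge_prob_def edge_scale_def\<close>)
qed

lemma cbar_of_weights_tendsto:
  assumes "0 < \<alpha>" "0 < \<beta>" "0 < \<gamma>" "0 < w\<^sub>1" "0 < w\<^sub>2" "0 < w\<^sub>3"
  shows "(\<lambda>n. cbar_of_weights \<alpha> \<beta> \<gamma> n w\<^sub>1 w\<^sub>2 w\<^sub>3) \<longlonglongrightarrow> clustering_limit \<alpha> \<beta> \<gamma> w\<^sub>3"
proof -
  define m where "m n = num_groups \<alpha> \<beta> n" for n
  define p where "p w n = \<gamma> * w * edge_scale \<alpha> n" for w n
  define e where "e n = real (m n) * (p w\<^sub>1 n * p w\<^sub>2 n + p w\<^sub>1 n * p w\<^sub>3 n + p w\<^sub>2 n * p w\<^sub>3 n)" for n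
  define K where "K n = 1 + (real (m n) - 1) * p w\<^sub>3 n" for n
  have "e = (\<lambda>n. \<gamma>\<^sup>2 * (w\<^sub>1 * w\<^sub>2 + w\<^sub>1 * w\<^sub>3 + w\<^sub>2 * w\<^sub>3) * (real (m n) * edge_scale \<alpha> n ^ 2))"
    by (simp add: fun_eq_iff e_def p_def power2_eq_square algebra_simps)
  then have e: "e \<longlonglongrightarrow> 0"
    unfolding m_def using assms by (simp add: tendsto_mult_right_zero num_groups_edge_scale_sq_tendsto_0)
  have K: "(\<lambda>n. 1 / K n) \<longlonglongrightarrow> clustering_limit \<alpha> \<beta> \<gamma> w\<^sub>3"
    unfolding K_def p_def m_def by (rule tendsto_clustering_limit) (use assms in auto)
  have m2: "eventually (\<lambda>n. 2 \<le> real (m n)) sequentially"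
    using num_groups_at_top[of \<alpha> \<beta>] assms unfolding filterlim_at_top m_def by blast
  define L where "L n = (1 - 3 * e n) * (1 / K n)" for n
  define U where "U n = (2 * e n + (1 + 2 * e n) * (1 / K n)) / (1 - e n)" for n
  have ev: "eventually (\<lambda>n. L n \<le> cbar_of_weights \<alpha> \<beta> \<gamma> n w\<^sub>1 w\<^sub>2 w\<^sub>3
                         \<and> cbar_of_weights \<alpha> \<beta> \<gamma> n w\<^sub>1 w\<^sub>2 w\<^sub>3 \<le> U n) sequentially"
    using eventually_clamped_edge_prob[OF assms(1,3,4)] eventually_clamped_edge_prob[OF assms(1,3,5)]
      eventually_clamped_edge_prob[OF assms(1,3,6)] order_tendstoD(2)[OF e, of "1/4", simplified] m2
  proof eventually_elim
    case (elim n)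
    then have bounds: "0 < p w\<^sub>1 n" "p w\<^sub>1 n \<le> 1" "0 < p w\<^sub>2 n" "p w\<^sub>2 n \<le> 1" "0 < p w\<^sub>3 n" "p w\<^sub>3 n \<le> 1"
      "2 \<le> m n" "e n \<le> 1/4"
      unfolding p_def m_def by auto
    have "cbar_of_weights \<alpha> \<beta> \<gamma> n w\<^sub>1 w\<^sub>2 w\<^sub>3
        = three_shares_prob (m n) (p w\<^sub>1 n) (p w\<^sub>2 n) (p w\<^sub>3 n) / two_shares_prob (m n) (p w\<^sub>1 n) (p w\<^sub>2 n) (p w\<^sub>3 n)"
      using elim unfolding cbar_of_weights_def m_def p_def Let_def by simp
    with three_shares_div_two_shares_bounds[OF bounds[unfolded e_def], folded e_def K_def]
    show ?case by (simp add: L_def U_def)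
  qed
  have lim: "L \<longlonglongrightarrow> (1 - 3 * 0) * clustering_limit \<alpha> \<beta> \<gamma> w\<^sub>3"
    "U \<longlonglongrightarrow> (2 * 0 + (1 + 2 * 0) * clustering_limit \<alpha> \<beta> \<gamma> w\<^sub>3) / (1 - 0)"
    unfolding L_def U_def by (intro tendsto_intros e K; simp)+
  show ?thesis
    by (rule tendsto_sandwich[OF eventually_mono[OF ev] eventually_mono[OF ev] lim[simplified]]) simp_all
qed

section \<open>Averaging over the weights\<close>

lemma borel_measurable_cbar_of_weights[measurable]:
  assumes [measurable]: "f \<in> borel_measurable M" "g \<in> borel_measurable M" "h \<in> borel_measurable M"
  shows "(\<lambda>x. cbar_of_weights \<alpha> \<beta> \<gamma> n (f x) (g x) (h x)) \<in> borel_measurable M"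
  unfolding cbar_of_weights_def three_shares_prob_def two_shares_prob_def clamped_edge_prob_def
    edge_prob_def Let_def
  by measurable

lemma borel_measurable_clustering_limit[measurable]:
  "clustering_limit \<alpha> \<beta> \<gamma> \<in> borel_measurable borel"
  unfolding clustering_limit_def by measurable

lemma measurable_component_borel:
  assumes "sets F = sets borel" "l \<in> J"
  shows "(\<lambda>\<omega>. \<omega> l) \<in> borel_measurable (PiM J (\<lambda>_. F))"
  using measurable_component_singleton[OF assms(2), of "\<lambda>_. F"]
  unfolding measurable_cong_sets[OF refl assms(1)] .

lemma (in product_prob_space) integral_PiM_restrict:
  fixes f :: "_ \<Rightarrow> real"
  assumes "finite J" "J \<subseteq> I" "f \<in> borel_measurable (PiM J M)"
  shows "(\<integral>x. f (restrict x J) \<partial>PiM I M) = (\<integral>x. f x \<partial>PiM J M)"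
proof -
  have "(\<integral>x. f (restrict x J) \<partial>PiM I M) = (\<integral>x. f x \<partial>distr (PiM I M) (PiM J M) (\<lambda>x. restrict x J))"
    by (rule integral_distr[symmetric, OF measurable_restrict_subset[OF assms(2)] assms(3)])
  then show ?thesis by (simp add: distr_PiM_restrict_finite assms)
qed

lemma integral_PiM_component:
  fixes f :: "_ \<Rightarrow> real"
  assumes "\<And>i. i \<in> I \<Longrightarrow> prob_space (M i)" "i \<in> I" "f \<in> borel_measurable (M i)"
  shows "(\<integral>x. f (x i) \<partial>PiM I M) = integral\<^sup>L (M i) f"
proof -
  have "(\<integral>x. f (x i) \<partial>PiM I M) = integral\<^sup>L (distr (PiM I M) (M i) (\<lambda>x. x i)) f"
    by (rule integral_distr[symmetric, OF measurable_component_singleton[OF assms(2), of M] assms(3)])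
  then show ?thesis by (simp add: distr_PiM_component assms)
qed

lemma exp_cbar_eq_integral_PiM_triple:
  assumes F: "prob_space F" "sets F = sets borel"
    and ijk: "{i, j, k} \<subseteq> {1..n}" "i \<noteq> j" "i \<noteq> k" "j \<noteq> k"
  shows "exp_cbar F \<alpha> \<beta> \<gamma> n i j k =
           (\<integral>\<omega>. cbar_of_weights \<alpha> \<beta> \<gamma> n (\<omega> i) (\<omega> j) (\<omega> k) \<partial>PiM {i, j, k} (\<lambda>_. F))"
proof -
  interpret product_prob_space "\<lambda>_. F" "{1..n}"
    using F by (intro product_prob_spaceI)
  have [measurable]: "(\<lambda>\<omega>. \<omega> l) \<in> borel_measurable (PiM {i, j, k} (\<lambda>_. F))" if "l \<in> {i, j, k}" for l
    using measurable_component_borel[OF F(2) that] .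
  have "exp_cbar F \<alpha> \<beta> \<gamma> n i j k
      = (\<integral>W. (\<lambda>\<omega>. cbar_of_weights \<alpha> \<beta> \<gamma> n (\<omega> i) (\<omega> j) (\<omega> k)) (restrict W {i, j, k}) \<partial>PiM {1..n} (\<lambda>_. F))"
    unfolding exp_cbar_def using ijk by (intro Bochner_Integration.integral_cong refl) (simp add: cbar_eq_cbar_of_weights)
  also have "\<dots> = (\<integral>\<omega>. cbar_of_weights \<alpha> \<beta> \<gamma> n (\<omega> i) (\<omega> j) (\<omega> k) \<partial>PiM {i, j, k} (\<lambda>_. F))"
    using ijk(1) by (intro integral_PiM_restrict) auto
  finally show ?thesis .
qed

lemma tendsto_integral_cbar_of_weights:
  assumes F: "prob_space F" "sets F = sets borel" "AE x in F. 0 < x"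
    and \<alpha>\<beta>\<gamma>: "0 < \<alpha>" "0 < \<beta>" "0 < \<gamma>" and ijk: "i \<in> J" "j \<in> J" "k \<in> J"
  shows "(\<lambda>n. \<integral>\<omega>. cbar_of_weights \<alpha> \<beta> \<gamma> n (\<omega> i) (\<omega> j) (\<omega> k) \<partial>PiM J (\<lambda>_. F))
           \<longlonglongrightarrow> (\<integral>\<omega>. clustering_limit \<alpha> \<beta> \<gamma> (\<omega> k) \<partial>PiM J (\<lambda>_. F))"
proof (rule LIMSEQ_offset[where k = 3], rule integral_dominated_convergence[where w = "\<lambda>_. 1"])
  \<comment> \<open>the bound 0 \<le> cbar_of_weights \<le> 1 is only known for n \<ge> 3\<close>
  interpret prob_space "PiM J (\<lambda>_. F)" by (intro prob_space_PiM F)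
  have [measurable]: "(\<lambda>\<omega>. \<omega> l) \<in> borel_measurable (PiM J (\<lambda>_. F))" if "l \<in> J" for l
    using measurable_component_borel[OF F(2) that] .
  show "(\<lambda>\<omega>. clustering_limit \<alpha> \<beta> \<gamma> (\<omega> k)) \<in> borel_measurable (PiM J (\<lambda>_. F))"
    "\<And>n. (\<lambda>\<omega>. cbar_of_weights \<alpha> \<beta> \<gamma> (n + 3) (\<omega> i) (\<omega> j) (\<omega> k)) \<in> borel_measurable (PiM J (\<lambda>_. F))"
    using ijk by measurable
  show "integrable (PiM J (\<lambda>_. F)) (\<lambda>_. 1 :: real)" by simp
  show "AE \<omega> in PiM J (\<lambda>_. F). norm (cbar_of_weights \<alpha> \<beta> \<gamma> (n + 3) (\<omega> i) (\<omega> j) (\<omega> k)) \<le> 1" for n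
    using cbar_of_weights_bounds[of "n + 3"] by auto
  have "AE \<omega> in PiM J (\<lambda>_. F). 0 < \<omega> l" if "l \<in> J" for l
    using F that by (intro AE_PiM_component) auto
  then have "AE \<omega> in PiM J (\<lambda>_. F). 0 < \<omega> i \<and> 0 < \<omega> j \<and> 0 < \<omega> k"
    using ijk by auto
  then show "AE \<omega> in PiM J (\<lambda>_. F). (\<lambda>n. cbar_of_weights \<alpha> \<beta> \<gamma> (n + 3) (\<omega> i) (\<omega> j) (\<omega> k))
      \<longlonglongrightarrow> clustering_limit \<alpha> \<beta> \<gamma> (\<omega> k)"
    by eventually_elim (intro LIMSEQ_ignore_initial_segment cbar_of_weights_tendsto \<alpha>\<beta>\<gamma>; simp)
qed

theorem mainTheorem4:
  fixes F :: "real measure" and \<alpha> \<beta> \<gamma> :: real and i j k :: nat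
  assumes "prob_space F" and "sets F = sets borel"
    and "AE x in F. x > 0"
    and "integrable F (\<lambda>x. x)" and "integral\<^sup>L F (\<lambda>x. x) = 1"
    and "\<alpha> > 0" and "\<beta> > 0" and "\<gamma> > 0"
    and "i \<ge> 1" and "j \<ge> 1" and "k \<ge> 1"
    and "i \<noteq> j" and "i \<noteq> k" and "j \<noteq> k"
  shows "(\<lambda>n. exp_cbar F \<alpha> \<beta> \<gamma> n i j k) \<longlonglongrightarrow>
           (if \<alpha> < 1 then 1
            else if \<alpha> = 1 then integral\<^sup>L F (\<lambda>x. 1 / (1 + \<beta> * \<gamma> * x))
            else 0)"
proof -
  interpret F: prob_space F by fact
  let ?PF = "PiM {i, j, k} (\<lambda>_. F)"
  have "eventually (\<lambda>n. exp_cbar F \<alpha> \<beta> \<gamma> n i j k =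
      (\<integral>\<omega>. cbar_of_weights \<alpha> \<beta> \<gamma> n (\<omega> i) (\<omega> j) (\<omega> k) \<partial>?PF)) sequentially"
    using eventually_ge_at_top[of "max i (max j k)"]
    by eventually_elim (rule exp_cbar_eq_integral_PiM_triple, use assms in auto)
  moreover have "(\<lambda>n. \<integral>\<omega>. cbar_of_weights \<alpha> \<beta> \<gamma> n (\<omega> i) (\<omega> j) (\<omega> k) \<partial>?PF)
      \<longlonglongrightarrow> (\<integral>\<omega>. clustering_limit \<alpha> \<beta> \<gamma> (\<omega> k) \<partial>?PF)"
    by (rule tendsto_integral_cbar_of_weights) (use assms in auto)
  moreover have "clustering_limit \<alpha> \<beta> \<gamma> \<in> borel_measurable F"
    using borel_measurable_clustering_limit unfolding measurable_cong_sets[OF assms(2) refl] .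
  then have "(\<integral>\<omega>. clustering_limit \<alpha> \<beta> \<gamma> (\<omega> k) \<partial>?PF) = integral\<^sup>L F (clustering_limit \<alpha> \<beta> \<gamma>)"
    using assms(1) by (intro integral_PiM_component) auto
  moreover have "integral\<^sup>L F (clustering_limit \<alpha> \<beta> \<gamma>) = (if \<alpha> < 1 then 1
      else if \<alpha> = 1 then integral\<^sup>L F (\<lambda>x. 1 / (1 + \<beta> * \<gamma> * x)) else 0)"
    by (simp add: clustering_limit_def[abs_def] F.prob_space)
  ultimately show ?thesis
    by (simp add: tendsto_cong)
qed

end
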